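(* Let $X$ and $Y$ be Tychonoff spaces and let $f\colon X\to Y$ be a quotient map of $X$ onto $Y$. If $X$ is a weakly Grothendieck space, then $Y$ is a weakly Grothendieck space.
   Context: For a Tychonoff space $X$, $C_p(X)$ denotes the space of all continuous real-valued functions on $X$ with the topology of pointwise convergence. A subset $A$ of a space $Z$ is countably compact in $Z$ if every infinite subset of $A$ has an accumulation point in $Z$. A space $Z$ is a $g$-space if for every subset $A\subseteq Z$ that is countably compact in $Z$, the closure of $A$ in $Z$ is compact. A Tychonoff space $X$ is weakly Grothendieck if $C_p(X)$ is a $g$-space, and Grothendieck if every subspace of $C_p(X)$ is a $g$-space. *)

theory Defs
  imports "HOL-Analysis.Analysis"
begin

definition tychonoff_space :: "'a topology \<Rightarrow> bool" where
  "tychonoff_space X \<longleftrightarrow> completely_regular_space X \<and> t1_space X"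

text \<open>C_p(X): continuous real functions on X (restricted to topspace X, extensional)
  with the topology of pointwise convergence, i.e. as a subspace of the product R^X.\<close>
definition Cp :: "'a topology \<Rightarrow> ('a \<Rightarrow> real) topology" where
  "Cp X = subtopology (product_topology (\<lambda>_. euclideanreal) (topspace X))
            {f. continuous_map X euclideanreal f \<and> f \<in> extensional (topspace X)}"

definition countably_compact_in :: "'b topology \<Rightarrow> 'b set \<Rightarrow> bool" where
  "countably_compact_in Z A \<longleftrightarrow> A \<subseteq> topspace Z \<and>
     (\<forall>B. B \<subseteq> A \<and> infinite B \<longrightarrow> Z derived_set_of B \<noteq> {})"

definition g_space :: "'b topology \<Rightarrow> bool" where
  "g_space Z \<longleftrightarrow> (\<forall>A. countably_compact_in Z A \<longrightarrow> compactin Z (Z closure_of A))"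

definition weakly_grothendieck :: "'a topology \<Rightarrow> bool" where
  "weakly_grothendieck X \<longleftrightarrow> tychonoff_space X \<and> g_space (Cp X)"

end

theory Submission
  imports Defs
begin

text \<open>Composition with f identifies C_p(Y) with the functions in C_p(X) that are constant on the
  fibres of f: every such function factors continuously through the quotient map f, and evaluating
  at one chosen point of each fibre inverts the composition continuously. That set of functions
  is closed in C_p(X), and a closed subspace of a g-space is again a g-space, since countable
  compactness in the subspace implies it in the whole space and closures of its subsets stay inside.\<close>

lemma countably_compact_in_homeomorphic_image:
  assumes hom: "homeomorphic_map W Z h" and A: "countably_compact_in W A"
  shows "countably_compact_in Z (h ` A)"
  unfolding countably_compact_in_def
proof (intro conjI allI impI)
  have A_sub: "A \<subseteq> topspace W"
    using A by (simp add: countably_compact_in_def)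
  then show "h ` A \<subseteq> topspace Z"
    using homeomorphic_imp_surjective_map [OF hom] by blast
  fix B assume B: "B \<subseteq> h ` A \<and> infinite B"
  define B' where "B' = {a \<in> A. h a \<in> B}"
  have hB': "h ` B' = B"
    using B by (auto simp: B'_def)
  have "infinite B'"
    using B hB' by (metis finite_imageI)
  then have "W derived_set_of B' \<noteq> {}"
    using A by (auto simp: countably_compact_in_def B'_def)
  moreover have "Z derived_set_of B = h ` (W derived_set_of B')"
    using homeomorphic_map_derived_set_of [OF hom, of B'] A_sub hB' by (auto simp: B'_def)
  ultimately show "Z derived_set_of B \<noteq> {}"
    by simp
qed

lemma g_space_homeomorphic_map:
  assumes hom: "homeomorphic_map W Z h" and "g_space Z"
  shows "g_space W"
  unfolding g_space_def
proof (intro allI impI)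
  fix A assume A: "countably_compact_in W A"
  then have A_sub: "A \<subseteq> topspace W"
    by (simp add: countably_compact_in_def)
  have "compactin Z (Z closure_of (h ` A))"
    using \<open>g_space Z\<close> countably_compact_in_homeomorphic_image [OF hom A]
    by (simp add: g_space_def)
  then show "compactin W (W closure_of A)"
    by (simp add: homeomorphic_map_closure_of [OF hom A_sub]
        homeomorphic_map_compactness [OF hom closure_of_subset_topspace])
qed

lemma g_space_closed_subtopology:
  assumes "g_space Z" and "closedin Z S"
  shows "g_space (subtopology Z S)"
  unfolding g_space_def
proof (intro allI impI)
  fix A assume A: "countably_compact_in (subtopology Z S) A"
  then have "A \<subseteq> S"
    by (simp add: countably_compact_in_def)
  have "countably_compact_in Z A"
    unfolding countably_compact_in_def
  proof (intro conjI allI impI)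
    show "A \<subseteq> topspace Z"
      using A by (simp add: countably_compact_in_def)
    fix B assume B: "B \<subseteq> A \<and> infinite B"
    then have "subtopology Z S derived_set_of B \<noteq> {}"
      using A by (simp add: countably_compact_in_def)
    moreover have "B \<subseteq> S"
      using B \<open>A \<subseteq> S\<close> by blast
    ultimately show "Z derived_set_of B \<noteq> {}"
      by (auto simp: derived_set_of_subtopology Int_absorb1)
  qed
  then have "compactin Z (Z closure_of A)"
    using \<open>g_space Z\<close> by (simp add: g_space_def)
  moreover have "Z closure_of A \<subseteq> S"
    using \<open>A \<subseteq> S\<close> \<open>closedin Z S\<close> by (rule closure_of_minimal)
  ultimately show "compactin (subtopology Z S) (subtopology Z S closure_of A)"
    using \<open>A \<subseteq> S\<close> by (simp add: closure_of_subtopology compactin_subtopology Int_absorb1)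
qed

lemma g_space_closed_embedding:
  assumes "embedding_map W Z h" and "closedin Z (h ` topspace W)" and "g_space Z"
  shows "g_space W"
  using assms g_space_closed_subtopology g_space_homeomorphic_map
  unfolding embedding_map_def by blast

lemma topspace_Cp:
  "topspace (Cp X) = {g. continuous_map X euclideanreal g \<and> g \<in> extensional (topspace X)}"
  unfolding Cp_def by (auto simp: PiE_iff extensional_def)

lemma continuous_map_Cp_eval:
  assumes "x \<in> topspace X"
  shows "continuous_map (Cp X) euclideanreal (\<lambda>g. g x)"
  unfolding Cp_def
  using continuous_map_product_projection [OF assms, of "\<lambda>_. euclideanreal"]
  by (simp add: continuous_map_from_subtopology)

lemma continuous_map_into_Cp:
  assumes "\<And>z. z \<in> topspace Z \<Longrightarrow> F z \<in> topspace (Cp X)"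
    and "\<And>x. x \<in> topspace X \<Longrightarrow> continuous_map Z euclideanreal (\<lambda>z. F z x)"
  shows "continuous_map Z (Cp X) F"
  using assms unfolding Cp_def continuous_map_in_subtopology continuous_map_componentwise
  by (auto simp: topspace_Cp)

definition Cp_pullback :: "'a topology \<Rightarrow> ('a \<Rightarrow> 'b) \<Rightarrow> ('b \<Rightarrow> real) \<Rightarrow> 'a \<Rightarrow> real" where
  "Cp_pullback X f g = restrict (g \<circ> f) (topspace X)"

lemma Cp_pullback_in_topspace:
  assumes "continuous_map X Y f" and "g \<in> topspace (Cp Y)"
  shows "Cp_pullback X f g \<in> topspace (Cp X)"
proof -
  have "continuous_map X euclideanreal (g \<circ> f)"
    using assms continuous_map_compose by (auto simp: topspace_Cp)
  then show ?thesis
    by (simp add: topspace_Cp Cp_pullback_def continuous_map_eq [where f = "g \<circ> f"])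
qed

lemma continuous_map_Cp_pullback:
  assumes f: "continuous_map X Y f"
  shows "continuous_map (Cp Y) (Cp X) (Cp_pullback X f)"
proof (rule continuous_map_into_Cp)
  fix x assume x: "x \<in> topspace X"
  then have "f x \<in> topspace Y"
    using f by (auto simp: continuous_map_def)
  then show "continuous_map (Cp Y) euclideanreal (\<lambda>g. Cp_pullback X f g x)"
    using continuous_map_Cp_eval x by (simp add: Cp_pullback_def)
qed (rule Cp_pullback_in_topspace [OF f])

lemma embedding_map_Cp_pullback:
  assumes f: "continuous_map X Y f" and surj: "f ` topspace X = topspace Y"
  shows "embedding_map (Cp Y) (Cp X) (Cp_pullback X f)"
proof -
  define S where "S = Cp_pullback X f ` topspace (Cp Y)"
  define G where "G = (\<lambda>h :: 'a \<Rightarrow> real. restrict (\<lambda>y. h (inv_into (topspace X) f y)) (topspace Y))"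
  have fibre_point: "inv_into (topspace X) f y \<in> topspace X" "f (inv_into (topspace X) f y) = y"
    if "y \<in> topspace Y" for y
    using that surj by (auto intro: inv_into_into f_inv_into_f)
  have G_pullback: "G (Cp_pullback X f g) = g" if "g \<in> topspace (Cp Y)" for g
  proof
    fix y show "G (Cp_pullback X f g) y = g y"
      using fibre_point [of y] that
      by (cases "y \<in> topspace Y") (auto simp: G_def Cp_pullback_def topspace_Cp extensional_def)
  qed
  have "continuous_map (subtopology (Cp X) S) (Cp Y) G"
  proof (rule continuous_map_into_Cp)
    fix h assume "h \<in> topspace (subtopology (Cp X) S)"
    then show "G h \<in> topspace (Cp Y)"
      using G_pullback by (auto simp: S_def)
  next
    fix y assume y: "y \<in> topspace Y"
    have "continuous_map (subtopology (Cp X) S) euclideanreal (\<lambda>h. h (inv_into (topspace X) f y))"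
      using continuous_map_Cp_eval [OF fibre_point(1) [OF y]] by (rule continuous_map_from_subtopology)
    then show "continuous_map (subtopology (Cp X) S) euclideanreal (\<lambda>h. G h y)"
      using y by (simp add: G_def)
  qed
  moreover have "continuous_map (Cp Y) (subtopology (Cp X) S) (Cp_pullback X f)"
    using continuous_map_Cp_pullback [OF f] by (simp add: continuous_map_in_subtopology S_def)
  ultimately have "homeomorphic_maps (Cp Y) (subtopology (Cp X) S) (Cp_pullback X f) G"
    using G_pullback by (auto simp: homeomorphic_maps_def S_def)
  then show ?thesis
    unfolding embedding_map_def homeomorphic_map_maps S_def by blast
qed

lemma closedin_Cp_constant_on_fibres:
  "closedin (Cp X) {h \<in> topspace (Cp X). \<forall>x\<in>topspace X. \<forall>x'\<in>topspace X. f x = f x' \<longrightarrow> h x = h x'}"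
proof -
  let ?E = "\<lambda>x x'. {h \<in> topspace (Cp X). h x = h x'}"
  have "closedin (Cp X) (?E x x')" if "x \<in> topspace X" "x' \<in> topspace X" for x x'
    using closedin_continuous_maps_eq [OF _ continuous_map_Cp_eval continuous_map_Cp_eval] that by simp
  then have "closedin (Cp X) (\<Inter> (insert (topspace (Cp X))
               {?E x x' | x x'. x \<in> topspace X \<and> x' \<in> topspace X \<and> f x = f x'}))"
    by (intro closedin_Inter) auto
  moreover have "\<Inter> (insert (topspace (Cp X)) {?E x x' | x x'. x \<in> topspace X \<and> x' \<in> topspace X \<and> f x = f x'})
      = {h \<in> topspace (Cp X). \<forall>x\<in>topspace X. \<forall>x'\<in>topspace X. f x = f x' \<longrightarrow> h x = h x'}"
    by blast
  ultimately show ?thesis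
    by simp
qed

lemma Cp_pullback_image_quotient_map:
  assumes q: "quotient_map X Y f"
  shows "Cp_pullback X f ` topspace (Cp Y)
           = {h \<in> topspace (Cp X). \<forall>x\<in>topspace X. \<forall>x'\<in>topspace X. f x = f x' \<longrightarrow> h x = h x'}"
    (is "_ = ?S")
proof
  show "Cp_pullback X f ` topspace (Cp Y) \<subseteq> ?S"
    using Cp_pullback_in_topspace [OF quotient_imp_continuous_map [OF q]]
    by (auto simp: Cp_pullback_def)
  show "?S \<subseteq> Cp_pullback X f ` topspace (Cp Y)"
  proof
    fix h assume h: "h \<in> ?S"
    then have h_cont: "continuous_map X euclideanreal h" and h_ext: "h \<in> extensional (topspace X)"
      by (auto simp: topspace_Cp)
    obtain g where g: "continuous_map Y euclideanreal g"
      and gf: "\<And>x. x \<in> topspace X \<Longrightarrow> g (f x) = h x"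
      by (rule quotient_map_lift_exists [OF q h_cont]) (use h in blast)+
    let ?g = "restrict g (topspace Y)"
    have "?g \<in> topspace (Cp Y)"
      using g by (simp add: topspace_Cp continuous_map_eq [where f = g])
    moreover have "Cp_pullback X f ?g = h"
    proof
      fix x show "Cp_pullback X f ?g x = h x"
        using gf h_ext quotient_imp_continuous_map [OF q]
        by (cases "x \<in> topspace X") (auto simp: Cp_pullback_def extensional_def continuous_map_def)
    qed
    ultimately show "h \<in> Cp_pullback X f ` topspace (Cp Y)"
      by force
  qed
qed

theorem lemma2:
  fixes X :: "'a topology" and Y :: "'b topology" and f :: "'a \<Rightarrow> 'b"
  assumes "tychonoff_space X" and "tychonoff_space Y"
    and "quotient_map X Y f"
    and "weakly_grothendieck X"
  shows "weakly_grothendieck Y"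
proof -
  have "embedding_map (Cp Y) (Cp X) (Cp_pullback X f)"
    using assms(3) by (simp add: embedding_map_Cp_pullback quotient_imp_continuous_map
        quotient_imp_surjective_map)
  moreover have "closedin (Cp X) (Cp_pullback X f ` topspace (Cp Y))"
    using assms(3) by (simp add: Cp_pullback_image_quotient_map closedin_Cp_constant_on_fibres)
  moreover have "g_space (Cp X)"
    using assms(4) by (simp add: weakly_grothendieck_def)
  ultimately have "g_space (Cp Y)"
    by (rule g_space_closed_embedding)
  then show ?thesis
    using assms(2) by (simp add: weakly_grothendieck_def)
qed

end
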